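(* Let $H$ be an $r$-graph. If $H$ contains a $2$-locally large subgraph, then $H$ is $2$-locally large.
   Context: An $r$-graph is an $r$-uniform hypergraph. Let $H$ be an $r$-graph on $m$ vertices and $\sigma:V(H)\to[m]$ a bijection. For $x\in V(H)$ and $1\le i\le r$, $T_x^i$ is the set of edges $e\ni x$ such that $\sigma(x)$ is the $i$-th smallest of the values $\sigma(v)$, $v\in e$. For $r+1\le i\le 2r+1$, $T_x^i$ is the set of edges $e\not\ni x$ such that $\sigma(x)$ is the $(i-r)$-th smallest among the values $\sigma(v)$, $v\in e\cup\{x\}$. $H$ is $2$-locally large if there exists a bijection $\sigma:V(H)\to[m]$ such that for every vertex $x\in V(H)$ some $T_x^i$, $i\in[2r+1]$, contains at least two edges. *)

theory Defs
  imports Main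
begin

definition r_graph :: "nat \<Rightarrow> 'a set \<Rightarrow> 'a set set \<Rightarrow> bool" where
  "r_graph r V E \<longleftrightarrow> finite V \<and> (\<forall>e\<in>E. e \<subseteq> V \<and> card e = r)"

definition subgraph :: "'a set \<Rightarrow> 'a set set \<Rightarrow> 'a set \<Rightarrow> 'a set set \<Rightarrow> bool" where
  "subgraph V' E' V E \<longleftrightarrow> V' \<subseteq> V \<and> E' \<subseteq> E \<and> (\<forall>e\<in>E'. e \<subseteq> V')"

text \<open>The sets T_x^i with respect to the ordering sigma (sigma injective on the vertices,
  so the i-th smallest value among a set is the one with exactly i values \<le> it).\<close>
definition T_set :: "nat \<Rightarrow> ('a \<Rightarrow> nat) \<Rightarrow> 'a set set \<Rightarrow> 'a \<Rightarrow> nat \<Rightarrow> 'a set set" where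
  "T_set r \<sigma> E x i =
     (if i \<le> r then {e\<in>E. x \<in> e \<and> card {v\<in>e. \<sigma> v \<le> \<sigma> x} = i}
      else {e\<in>E. x \<notin> e \<and> card {v\<in>insert x e. \<sigma> v \<le> \<sigma> x} = i - r})"

definition locally_large2 :: "nat \<Rightarrow> 'a set \<Rightarrow> 'a set set \<Rightarrow> bool" where
  "locally_large2 r V E \<longleftrightarrow>
     (\<exists>\<sigma>. bij_betw \<sigma> V {1..card V} \<and>
          (\<forall>x\<in>V. \<exists>i\<in>{1..2*r+1}. 2 \<le> card (T_set r \<sigma> E x i)))"

end

theory Submission
  imports Defs
begin

text \<open>Order the vertices of the large subgraph (V', E') first, as its witnessing ordering
  prescribes, and the remaining vertices of V after them. A vertex of V' then sees every edge
  of E' exactly as before, since only the relative order inside an edge and the vertex itself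
  matters. A vertex outside V' comes after every vertex of V', so all edges of E' lie in its
  last class T_x^{2r+1}; and E' has at least two edges, because V' is nonempty and some class
  of one of its vertices already has two.\<close>

lemma r_graph_finite_edges:
  assumes "r_graph r V E"
  shows "finite E"
  by (rule finite_subset[of E "Pow V"]) (use assms in \<open>auto simp: r_graph_def\<close>)

lemma r_graph_subgraph:
  assumes "r_graph r V E" and "subgraph V' E' V E"
  shows "r_graph r V' E'"
  using assms unfolding r_graph_def subgraph_def by (auto intro: finite_subset)

lemma T_set_subset_edges: "T_set r \<sigma> E x i \<subseteq> E"
  unfolding T_set_def by auto

lemma two_le_card_edges_if_locally_large2:
  assumes "locally_large2 r V E" and "V \<noteq> {}" and "finite E"
  shows "2 \<le> card E"
proof -
  obtain \<sigma> where "\<forall>x\<in>V. \<exists>i\<in>{1..2*r+1}. 2 \<le> card (T_set r \<sigma> E x i)"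
    using assms(1) unfolding locally_large2_def by blast
  then obtain x i where "2 \<le> card (T_set r \<sigma> E x i)"
    using assms(2) by blast
  also have "\<dots> \<le> card E"
    using assms(3) T_set_subset_edges by (rule card_mono)
  finally show ?thesis .
qed

lemma T_set_mono:
  assumes "E' \<subseteq> E" and "\<And>v. v \<in> insert x (\<Union>E') \<Longrightarrow> \<sigma> v = s v"
  shows "T_set r s E' x i \<subseteq> T_set r \<sigma> E x i"
proof
  fix e assume e: "e \<in> T_set r s E' x i"
  then have "e \<in> E'"
    by (rule subsetD[OF T_set_subset_edges])
  then have "\<forall>v\<in>insert x e. \<sigma> v = s v"
    using assms(2) by blast
  then have "{v\<in>e. \<sigma> v \<le> \<sigma> x} = {v\<in>e. s v \<le> s x}"
    and "{v\<in>insert x e. \<sigma> v \<le> \<sigma> x} = {v\<in>insert x e. s v \<le> s x}"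
    by auto
  with e \<open>e \<in> E'\<close> assms(1) show "e \<in> T_set r \<sigma> E x i"
    unfolding T_set_def by (auto split: if_splits)
qed

lemma subset_T_set_last:
  assumes "E' \<subseteq> E" and "r_graph r V E'" and "x \<notin> V" and "\<forall>v\<in>V. \<sigma> v \<le> \<sigma> x"
  shows "E' \<subseteq> T_set r \<sigma> E x (2*r+1)"
proof
  fix e assume "e \<in> E'"
  with assms(2) have "e \<subseteq> V" and "card e = r" and "finite e"
    unfolding r_graph_def by (auto intro: finite_subset)
  with assms(3) have "x \<notin> e"
    by blast
  moreover have "card (insert x e) = r + 1"
    using \<open>x \<notin> e\<close> \<open>finite e\<close> \<open>card e = r\<close> by simp
  moreover have "{v\<in>insert x e. \<sigma> v \<le> \<sigma> x} = insert x e"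
    using \<open>e \<subseteq> V\<close> assms(4) by auto
  ultimately show "e \<in> T_set r \<sigma> E x (2*r+1)"
    using \<open>e \<in> E'\<close> assms(1) unfolding T_set_def by auto
qed

lemma two_le_card_T_set_last:
  assumes "locally_large2 r V' E'" and "V' \<noteq> {}" and "r_graph r V' E'"
    and "E' \<subseteq> E" and "finite E" and "x \<notin> V'" and "\<forall>v\<in>V'. \<sigma> v \<le> \<sigma> x"
  shows "2 \<le> card (T_set r \<sigma> E x (2*r+1))"
proof -
  have "2 \<le> card E'"
    using assms(1,2) r_graph_finite_edges[OF assms(3)] by (rule two_le_card_edges_if_locally_large2)
  also have "\<dots> \<le> card (T_set r \<sigma> E x (2*r+1))"
    using subset_T_set_last[OF assms(4,3,6,7)]
    by (rule card_mono[OF finite_subset[OF T_set_subset_edges assms(5)]])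
  finally show ?thesis .
qed

lemma bij_betw_extend_after:
  assumes "finite B" and "A \<subseteq> B" and "bij_betw s A {1..card A}"
  obtains \<sigma> where "bij_betw \<sigma> B {1..card B}" and "\<forall>x\<in>A. \<sigma> x = s x"
    and "\<forall>x\<in>A. \<forall>y\<in>B - A. \<sigma> x < \<sigma> y"
proof -
  let ?k = "card A"
  obtain f where f: "bij_betw f (B - A) {0..<card (B - A)}"
    using ex_bij_betw_finite_nat assms(1) by blast
  define \<sigma> where "\<sigma> x = (if x \<in> A then s x else ?k + 1 + f x)" for x
  have card_B: "card B = ?k + card (B - A)"
    using assms(1,2) by (simp add: card_Diff_subset card_mono finite_subset)
  have "bij_betw \<sigma> A {1..?k}"
    using assms(3) by (rule bij_betw_cong[THEN iffD1, rotated]) (simp add: \<sigma>_def)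
  moreover have "bij_betw \<sigma> (B - A) {?k + 1..card B}"
  proof -
    have "bij_betw ((+) (?k + 1)) {0..<card (B - A)} {?k + 1..card B}"
      unfolding bij_betw_def image_add_atLeastLessThan card_B by auto
    with f have "bij_betw ((+) (?k + 1) \<circ> f) (B - A) {?k + 1..card B}"
      by (rule bij_betw_trans)
    then show ?thesis
      by (rule bij_betw_cong[THEN iffD1, rotated]) (simp add: \<sigma>_def)
  qed
  ultimately have "bij_betw \<sigma> (A \<union> (B - A)) ({1..?k} \<union> {?k + 1..card B})"
    by (rule bij_betw_combine) auto
  moreover have "A \<union> (B - A) = B" and "{1..?k} \<union> {?k + 1..card B} = {1..card B}"
    using assms(2) card_B by auto
  ultimately have "bij_betw \<sigma> B {1..card B}"
    by simp
  moreover have "\<forall>x\<in>A. \<forall>y\<in>B - A. \<sigma> x < \<sigma> y"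
    using bij_betwE[OF assms(3)] by (auto simp: \<sigma>_def)
  ultimately show ?thesis
    using that by (simp add: \<sigma>_def)
qed

theorem proposition2:
  fixes r :: nat and V V' :: "'a set" and E E' :: "'a set set"
  assumes "r_graph r V E"
    and "subgraph V' E' V E"
    and "V' \<noteq> {}"
    and "locally_large2 r V' E'"
  shows "locally_large2 r V E"
proof -
  have "V' \<subseteq> V" and "E' \<subseteq> E" and "finite V" and "finite E"
    using assms(1,2) r_graph_finite_edges[OF assms(1)] unfolding subgraph_def r_graph_def by auto
  have r_graph': "r_graph r V' E'"
    using assms(1,2) by (rule r_graph_subgraph)
  obtain s where s: "bij_betw s V' {1..card V'}"
    and large_s: "\<forall>x\<in>V'. \<exists>i\<in>{1..2*r+1}. 2 \<le> card (T_set r s E' x i)"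
    using assms(4) unfolding locally_large2_def by blast
  obtain \<sigma> where \<sigma>: "bij_betw \<sigma> V {1..card V}" and agree: "\<forall>x\<in>V'. \<sigma> x = s x"
    and after: "\<forall>v\<in>V'. \<forall>x\<in>V - V'. \<sigma> v < \<sigma> x"
    using bij_betw_extend_after[OF \<open>finite V\<close> \<open>V' \<subseteq> V\<close> s] by blast
  have "\<exists>i\<in>{1..2*r+1}. 2 \<le> card (T_set r \<sigma> E x i)" if "x \<in> V" for x
  proof (cases "x \<in> V'")
    case True
    then obtain i where "i \<in> {1..2*r+1}" and "2 \<le> card (T_set r s E' x i)"
      using large_s by blast
    moreover have "T_set r s E' x i \<subseteq> T_set r \<sigma> E x i"
      using \<open>E' \<subseteq> E\<close> True agree assms(2) unfolding subgraph_def by (intro T_set_mono) blast+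
    ultimately show ?thesis
      using card_mono[OF finite_subset[OF T_set_subset_edges \<open>finite E\<close>]] by (meson order_trans)
  next
    case False
    with after that have "2 \<le> card (T_set r \<sigma> E x (2*r+1))"
      by (intro two_le_card_T_set_last[OF assms(4,3) r_graph' \<open>E' \<subseteq> E\<close> \<open>finite E\<close>])
        (auto simp: less_imp_le)
    then show ?thesis
      by auto
  qed
  with \<sigma> show ?thesis
    unfolding locally_large2_def by blast
qed

end
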